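(* The set $\mathcal{A}_N^C$ is star-shaped with respect to the flat matrix $T_*=\frac1N\sum_{k=0}^{N-1}X^k$: for every $T\in\mathcal{A}_N^C$ and every $m\in(0,1]$, $mT+(1-m)T_*\in\mathcal{A}_N^C$.
   Context: $X$ is the $N\times N$ cyclic shift $X|j\rangle=|j\oplus1\rangle$ (addition mod $N$), $\mathcal{K}_k=X^k-\mathbb{I}_N$, and $\mathcal{A}_N^C$ is the set of matrices $\exp(\sum_{k=1}^{N-1}t_k\mathcal{K}_k)$ with all $t_k\ge0$. *)

theory Defs
  imports "HOL-Analysis.Analysis"
begin

text \<open>N x N real matrices are represented as functions nat => nat => real,
  with indices ranging over {0..<N}; entries outside are irrelevant and kept 0.\<close>

type_synonym rmat = "nat \<Rightarrow> nat \<Rightarrow> real"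

definition mmult :: "nat \<Rightarrow> rmat \<Rightarrow> rmat \<Rightarrow> rmat" where
  "mmult N A B = (\<lambda>i j. \<Sum>l<N. A i l * B l j)"

definition mid :: "nat \<Rightarrow> rmat" where
  "mid N = (\<lambda>i j. if i < N \<and> j < N \<and> i = j then 1 else 0)"

fun mpow :: "nat \<Rightarrow> rmat \<Rightarrow> nat \<Rightarrow> rmat" where
  "mpow N A 0 = mid N"
| "mpow N A (Suc k) = mmult N A (mpow N A k)"

definition mexp :: "nat \<Rightarrow> rmat \<Rightarrow> rmat" where
  "mexp N A = (\<lambda>i j. \<Sum>k. mpow N A k i j / fact k)"

definition shiftX :: "nat \<Rightarrow> rmat" where
  "shiftX N = (\<lambda>i j. if i < N \<and> j < N \<and> i = (j + 1) mod N then 1 else 0)"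

definition Kgen :: "nat \<Rightarrow> nat \<Rightarrow> rmat" where
  "Kgen N k = (\<lambda>i j. mpow N (shiftX N) k i j - mid N i j)"

definition AC :: "nat \<Rightarrow> rmat set" where
  "AC N = {mexp N (\<lambda>i j. \<Sum>k\<in>{1..N-1}. t k * Kgen N k i j) | t.
              \<forall>k\<in>{1..N-1}. t k \<ge> 0}"

definition Tflat :: "nat \<Rightarrow> rmat" where
  "Tflat N = (\<lambda>i j. (1 / real N) * (\<Sum>k<N. mpow N (shiftX N) k i j))"

end

theory Submission
  imports Defs
begin

(* Write P for the flat matrix T_* and A = sum_k t_k K_k for the generator of T = exp A.
   Since sum_{k<N} X^k = N P, raising every t_k by the same s >= 0 adds N s (P - I) to the
   generator.  Every K_k has zero row and column sums, so A P = P A = 0; together with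
   P^2 = P this gives exp (A + d P) = exp A + (e^d - 1) P, while the multiple of the identity
   only contributes the scalar factor e^(-d).  With d = N s the new element of A_N^C is
   therefore e^(-d) T + (1 - e^(-d)) P, and s = -ln m / N makes e^(-d) = m. *)

definition zero_outside :: "nat \<Rightarrow> rmat \<Rightarrow> bool" where
  "zero_outside N A \<longleftrightarrow> (\<forall>i j. \<not> (i < N \<and> j < N) \<longrightarrow> A i j = 0)"

lemma zero_outside_mid: "zero_outside N (mid N)"
  by (simp add: zero_outside_def mid_def)

lemma zero_outside_mmult: "zero_outside N A \<Longrightarrow> zero_outside N B \<Longrightarrow> zero_outside N (mmult N A B)"
  by (auto simp: zero_outside_def mmult_def)

lemma zero_outside_mpow: "zero_outside N A \<Longrightarrow> zero_outside N (mpow N A k)"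
  by (induction k) (auto simp: zero_outside_mid zero_outside_mmult)

lemma zero_outside_add_scaled:
  "zero_outside N A \<Longrightarrow> zero_outside N B \<Longrightarrow> zero_outside N (\<lambda>i j. A i j + c * B i j)"
  by (simp add: zero_outside_def)

lemma zero_outside_sum:
  "(\<And>k. zero_outside N (M k)) \<Longrightarrow> zero_outside N (\<lambda>i j. \<Sum>k\<in>S. f k * M k i j)"
  by (simp add: zero_outside_def)

lemma mmult_mid_left:
  assumes "zero_outside N B"
  shows "mmult N (mid N) B = B"
proof (intro ext)
  fix i j
  show "mmult N (mid N) B i j = B i j"
  proof (cases "i < N")
    case True
    have "mmult N (mid N) B i j = (\<Sum>l<N. if l = i then B i j else 0)"
      unfolding mmult_def mid_def by (rule sum.cong) (auto simp: True)
    then show ?thesis using True by simp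
  next
    case False
    then show ?thesis using assms by (auto simp: mmult_def mid_def zero_outside_def)
  qed
qed

lemma mmult_mid_right:
  assumes "zero_outside N B"
  shows "mmult N B (mid N) = B"
proof (intro ext)
  fix i j
  show "mmult N B (mid N) i j = B i j"
  proof (cases "j < N")
    case True
    have "mmult N B (mid N) i j = (\<Sum>l<N. if l = j then B i j else 0)"
      unfolding mmult_def mid_def by (rule sum.cong) (auto simp: True)
    then show ?thesis using True by simp
  next
    case False
    then show ?thesis using assms by (auto simp: mmult_def mid_def zero_outside_def)
  qed
qed

lemma mmult_assoc: "mmult N (mmult N A B) C = mmult N A (mmult N B C)"
proof (intro ext)
  fix i j
  have "mmult N (mmult N A B) C i j = (\<Sum>l<N. \<Sum>m<N. A i m * B m l * C l j)"
    by (simp add: mmult_def sum_distrib_right)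
  also have "\<dots> = (\<Sum>m<N. \<Sum>l<N. A i m * B m l * C l j)"
    by (rule sum.swap)
  also have "\<dots> = mmult N A (mmult N B C) i j"
    by (simp add: mmult_def sum_distrib_left mult.assoc)
  finally show "mmult N (mmult N A B) C i j = mmult N A (mmult N B C) i j" .
qed

lemma mmult_zero_left: "mmult N (\<lambda>_ _. 0) B = (\<lambda>_ _. 0)"
  by (simp add: mmult_def)

lemma mmult_add_left:
  "mmult N (\<lambda>i j. A i j + B i j) C = (\<lambda>i j. mmult N A C i j + mmult N B C i j)"
  by (simp add: mmult_def algebra_simps sum.distrib)

lemma mmult_add_right:
  "mmult N A (\<lambda>i j. B i j + C i j) = (\<lambda>i j. mmult N A B i j + mmult N A C i j)"
  by (simp add: mmult_def algebra_simps sum.distrib)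

lemma mmult_scale_left: "mmult N (\<lambda>i j. c * A i j) B = (\<lambda>i j. c * mmult N A B i j)"
  by (simp add: mmult_def algebra_simps sum_distrib_left)

lemma mmult_scale_right: "mmult N A (\<lambda>i j. c * B i j) = (\<lambda>i j. c * mmult N A B i j)"
  by (simp add: mmult_def algebra_simps sum_distrib_left)

lemma mmult_sum_right:
  "mmult N A (\<lambda>i j. \<Sum>k\<in>S. f k * M k i j) = (\<lambda>i j. \<Sum>k\<in>S. f k * mmult N A (M k) i j)"
  by (intro ext) (simp add: mmult_def sum_distrib_left algebra_simps sum.swap[of _ S])

lemma binomial_sum_Suc:
  fixes f :: "nat \<Rightarrow> real"
  shows "(\<Sum>k\<le>n. of_nat (n choose k) * c ^ (n - k) * f (Suc k))
           + c * (\<Sum>k\<le>n. of_nat (n choose k) * c ^ (n - k) * f k)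
         = (\<Sum>k\<le>Suc n. of_nat (Suc n choose k) * c ^ (Suc n - k) * f k)"
proof -
  have pascal: "(\<Sum>k\<le>Suc n. of_nat (Suc n choose k) * c ^ (Suc n - k) * f k)
      = c ^ Suc n * f 0 + (\<Sum>k\<le>n. of_nat (n choose k) * c ^ (n - k) * f (Suc k))
        + (\<Sum>k\<le>n. of_nat (n choose Suc k) * c ^ (n - k) * f (Suc k))"
    by (subst sum.atMost_Suc_shift) (simp add: sum.distrib algebra_simps)
  have "c * (\<Sum>k\<le>n. of_nat (n choose k) * c ^ (n - k) * f k)
      = (\<Sum>k\<le>n. of_nat (n choose k) * c ^ (Suc n - k) * f k)"
    unfolding sum_distrib_left by (intro sum.cong) (auto simp: Suc_diff_le)
  also have "\<dots> = (\<Sum>k\<le>Suc n. of_nat (n choose k) * c ^ (Suc n - k) * f k)"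
    by simp
  also have "\<dots> = c ^ Suc n * f 0 + (\<Sum>k\<le>n. of_nat (n choose Suc k) * c ^ (n - k) * f (Suc k))"
    by (subst sum.atMost_Suc_shift) simp
  finally show ?thesis
    using pascal by linarith
qed

lemma mpow_add_scaled_mid:
  assumes "zero_outside N B"
  shows "mpow N (\<lambda>i j. B i j + c * mid N i j) n
       = (\<lambda>i j. \<Sum>k\<le>n. of_nat (n choose k) * c ^ (n - k) * mpow N B k i j)"
proof (induction n)
  case 0
  then show ?case by simp
next
  case (Suc n)
  let ?S = "\<lambda>i j. \<Sum>k\<le>n. of_nat (n choose k) * c ^ (n - k) * mpow N B k i j"
  have "zero_outside N ?S"
    using assms by (intro zero_outside_sum zero_outside_mpow)
  then have "mpow N (\<lambda>i j. B i j + c * mid N i j) (Suc n) = (\<lambda>i j. mmult N B ?S i j + c * ?S i j)"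
    using Suc by (simp add: mmult_add_left mmult_scale_left mmult_mid_left)
  also have "\<dots> = (\<lambda>i j. (\<Sum>k\<le>n. of_nat (n choose k) * c ^ (n - k) * mpow N B (Suc k) i j) + c * ?S i j)"
    by (simp add: mmult_sum_right)
  also have "\<dots> = (\<lambda>i j. \<Sum>k\<le>Suc n. of_nat (Suc n choose k) * c ^ (Suc n - k) * mpow N B k i j)"
    by (intro ext) (rule binomial_sum_Suc)
  finally show ?case .
qed

lemma mpow_abs_le_power:
  assumes "zero_outside N A"
  obtains C where "\<And>k i j. \<bar>mpow N A k i j\<bar> \<le> C ^ k"
proof -
  define M where "M = (\<Sum>a<N. \<Sum>b<N. \<bar>A a b\<bar>)"
  have M0: "M \<ge> 0"
    unfolding M_def by (intro sum_nonneg) auto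
  have entry_le: "\<bar>A i l\<bar> \<le> M" for i l
  proof (cases "i < N \<and> l < N")
    case True
    have "\<bar>A i l\<bar> \<le> (\<Sum>b<N. \<bar>A i b\<bar>)"
      using True by (intro member_le_sum) auto
    also have "\<dots> \<le> M"
      unfolding M_def using True
      by (intro member_le_sum[where f = "\<lambda>a. \<Sum>b<N. \<bar>A a b\<bar>"]) (auto intro: sum_nonneg)
    finally show ?thesis .
  next
    case False
    then show ?thesis using assms M0 by (auto simp: zero_outside_def)
  qed
  define C where "C = real N * M + 1"
  have "\<bar>mpow N A k i j\<bar> \<le> C ^ k" for k i j
  proof (induction k arbitrary: i j)
    case 0
    then show ?case by (simp add: mid_def)
  next
    case (Suc k)
    have "\<bar>mpow N A (Suc k) i j\<bar> \<le> (\<Sum>l<N. \<bar>A i l\<bar> * \<bar>mpow N A k l j\<bar>)"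
      unfolding mpow.simps mmult_def by (rule order_trans[OF sum_abs]) (simp add: abs_mult)
    also have "\<dots> \<le> real N * M * C ^ k"
      using sum_mono[of "{..<N}" "\<lambda>l. \<bar>A i l\<bar> * \<bar>mpow N A k l j\<bar>" "\<lambda>_. M * C ^ k"]
      by (simp add: mult_mono entry_le Suc M0)
    also have "\<dots> \<le> C * C ^ k"
      using M0 by (intro mult_right_mono) (auto simp: C_def)
    finally show ?case by simp
  qed
  then show ?thesis by (rule that)
qed

lemma summable_mexp_series:
  assumes "zero_outside N A"
  shows "summable (\<lambda>k. norm (mpow N A k i j / fact k))"
proof -
  obtain C where C: "\<And>k i j. \<bar>mpow N A k i j\<bar> \<le> C ^ k"
    using mpow_abs_le_power[OF assms] by blast
  show ?thesis
  proof (rule summable_comparison_test[OF _ summable_exp[of C]], intro exI allI impI)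
    fix k :: nat
    show "norm (norm (mpow N A k i j / fact k)) \<le> inverse (fact k) * C ^ k"
      using mult_left_mono[OF C, of "inverse (fact k)" k i j] by (simp add: divide_inverse mult.commute abs_mult)
  qed
qed

lemma mexp_sums:
  assumes "zero_outside N A"
  shows "(\<lambda>k. mpow N A k i j / fact k) sums mexp N A i j"
  unfolding mexp_def
  using summable_norm_cancel[OF summable_mexp_series[OF assms]] by (rule summable_sums)

lemma exp_sums_real: "(\<lambda>k. c ^ k / fact k) sums exp (c :: real)"
  using exp_converges[of c] by (simp add: divide_inverse_commute)

lemma mexp_add_scaled_mid:
  assumes "zero_outside N B"
  shows "mexp N (\<lambda>i j. B i j + c * mid N i j) = (\<lambda>i j. exp c * mexp N B i j)"
proof (intro ext)
  fix i j
  let ?a = "\<lambda>k. mpow N B k i j / fact k"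
  let ?b = "\<lambda>k. c ^ k / fact k"
  have "summable (\<lambda>k. norm (?b k))"
    using summable_norm_exp[of c] by (simp add: divide_inverse_commute)
  then have "(\<lambda>n. \<Sum>k\<le>n. ?a k * ?b (n - k)) sums ((\<Sum>k. ?a k) * (\<Sum>k. ?b k))"
    by (rule Cauchy_product_sums[OF summable_mexp_series[OF assms]])
  moreover have "(\<Sum>k. ?b k) = exp c"
    using exp_sums_real sums_unique by metis
  moreover have "(\<Sum>k\<le>n. ?a k * ?b (n - k)) = mpow N (\<lambda>i j. B i j + c * mid N i j) n i j / fact n" for n
  proof -
    have "(\<Sum>k\<le>n. ?a k * ?b (n - k)) = (\<Sum>k\<le>n. of_nat (n choose k) * c ^ (n - k) * mpow N B k i j / fact n)"
      by (intro sum.cong refl) (simp add: binomial_fact field_simps)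
    then show ?thesis
      unfolding mpow_add_scaled_mid[OF assms] sum_divide_distrib .
  qed
  ultimately have "(\<lambda>n. mpow N (\<lambda>i j. B i j + c * mid N i j) n i j / fact n) sums (mexp N B i j * exp c)"
    by (simp add: mexp_def)
  then show "mexp N (\<lambda>i j. B i j + c * mid N i j) i j = exp c * mexp N B i j"
    unfolding mexp_def[of N "\<lambda>i j. B i j + c * mid N i j"] by (simp add: sums_iff)
qed

lemma mpow_add_scaled_idempotent:
  assumes A: "zero_outside N A" and P: "zero_outside N P" and PP: "mmult N P P = P"
    and AP: "mmult N A P = (\<lambda>_ _. 0)" and PA: "mmult N P A = (\<lambda>_ _. 0)"
  shows "mpow N (\<lambda>i j. A i j + d * P i j) (Suc n) = (\<lambda>i j. mpow N A (Suc n) i j + d ^ Suc n * P i j)"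
proof (induction n)
  case 0
  show ?case
    using mmult_mid_right[OF zero_outside_add_scaled[OF A P]] mmult_mid_right[OF A] by simp
next
  case (Suc n)
  have "mmult N P (mpow N A (Suc n)) = mmult N (mmult N P A) (mpow N A n)"
    by (simp add: mmult_assoc)
  then have PAn: "mmult N P (mpow N A (Suc n)) = (\<lambda>_ _. 0)"
    by (simp add: PA mmult_zero_left)
  have "mpow N (\<lambda>i j. A i j + d * P i j) (Suc (Suc n))
      = mmult N (\<lambda>i j. A i j + d * P i j) (\<lambda>i j. mpow N A (Suc n) i j + d ^ Suc n * P i j)"
    by (simp only: mpow.simps(2)[of N _ "Suc n"] Suc)
  also have "\<dots> = (\<lambda>i j. mmult N A (mpow N A (Suc n)) i j + d ^ Suc (Suc n) * P i j)"
    by (simp del: mpow.simps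
        add: mmult_add_left mmult_add_right mmult_scale_left mmult_scale_right PAn AP PP mult.assoc)
  finally show ?case by simp
qed

lemma mexp_add_scaled_idempotent:
  assumes A: "zero_outside N A" and P: "zero_outside N P" and PP: "mmult N P P = P"
    and AP: "mmult N A P = (\<lambda>_ _. 0)" and PA: "mmult N P A = (\<lambda>_ _. 0)"
  shows "mexp N (\<lambda>i j. A i j + d * P i j) = (\<lambda>i j. mexp N A i j + (exp d - 1) * P i j)"
proof (intro ext)
  fix i j
  have "(\<lambda>k. P i j * (d ^ k / fact k - (if k = 0 then 1 else 0))) sums (P i j * (exp d - 1))"
    by (intro sums_mult sums_diff exp_sums_real) (rule sums_single[where f = "\<lambda>_. 1", simplified])
  from sums_add[OF mexp_sums[OF A] this]
  have "(\<lambda>k. mpow N A k i j / fact k + P i j * (d ^ k / fact k - (if k = 0 then 1 else 0)))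
          sums (mexp N A i j + (exp d - 1) * P i j)"
    by (simp add: mult.commute)
  moreover have "mpow N A k i j / fact k + P i j * (d ^ k / fact k - (if k = 0 then 1 else 0))
      = mpow N (\<lambda>i j. A i j + d * P i j) k i j / fact k" for k
  proof (cases k)
    case 0
    then show ?thesis by simp
  next
    case (Suc n)
    then show ?thesis
      by (simp del: mpow.simps add: mpow_add_scaled_idempotent[OF assms] add_divide_distrib)
  qed
  ultimately show "mexp N (\<lambda>i j. A i j + d * P i j) i j = mexp N A i j + (exp d - 1) * P i j"
    unfolding mexp_def[of N "\<lambda>i j. A i j + d * P i j"] by (simp add: sums_iff)
qed

lemma sum_rotate_mod:
  fixes f :: "nat \<Rightarrow> 'a::comm_monoid_add"
  shows "(\<Sum>l<N. f ((l + k) mod N)) = (\<Sum>l<N. f l)"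
proof -
  have inj: "inj_on (\<lambda>l. (l + k) mod N) {..<N}"
  proof (intro inj_onI)
    fix l l' assume "l \<in> {..<N}" "l' \<in> {..<N}" "(l + k) mod N = (l' + k) mod N"
    then show "l = l'"
      using nat_mod_eq_iff[of "l + k" N "l' + k"] nat_mod_eq_iff[of l N l'] by auto
  qed
  moreover have "(\<lambda>l. (l + k) mod N) ` {..<N} = {..<N}"
    using inj by (intro endo_inj_surj) auto
  ultimately show ?thesis
    using sum.reindex[of "\<lambda>l. (l + k) mod N" "{..<N}" f] by simp
qed

lemma sum_delta_rotate_mod:
  fixes i N k :: nat
  assumes "i < N"
  shows "(\<Sum>l<N. if i = (l + k) mod N then 1 else 0) = (1 :: real)"
  using sum_rotate_mod[where f = "\<lambda>l. if i = l then 1 else (0 :: real)" and N = N and k = k] assms by simp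

lemma mpow_shiftX:
  "mpow N (shiftX N) k i j = (if i < N \<and> j < N \<and> i = (j + k) mod N then 1 else 0)"
proof (induction k arbitrary: i j)
  case 0
  then show ?case by (auto simp: mid_def)
next
  case (Suc k)
  have "mpow N (shiftX N) (Suc k) i j
      = (\<Sum>l<N. if l = (j + k) mod N then (if i < N \<and> j < N \<and> i = (l + 1) mod N then 1 else 0) else 0)"
    unfolding mpow.simps mmult_def Suc.IH by (intro sum.cong) (auto simp: shiftX_def)
  also have "\<dots> = (if i < N \<and> j < N \<and> i = ((j + k) mod N + 1) mod N then 1 else 0)"
    by (cases "N = 0") auto
  finally show ?case
    by (simp add: mod_Suc_eq)
qed

lemma Tflat_eq: "Tflat N = (\<lambda>i j. if i < N \<and> j < N then 1 / real N else 0)"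
proof (intro ext)
  fix i j
  show "Tflat N i j = (if i < N \<and> j < N then 1 / real N else 0)"
  proof (cases "i < N \<and> j < N")
    case True
    have "(\<Sum>k<N. mpow N (shiftX N) k i j) = (\<Sum>k<N. if i = (k + j) mod N then 1 else 0)"
      using True by (simp add: mpow_shiftX add.commute)
    also have "\<dots> = 1"
      using True by (rule conjunct1[THEN sum_delta_rotate_mod])
    finally show ?thesis
      using True by (simp add: Tflat_def)
  next
    case False
    then show ?thesis by (auto simp: Tflat_def mpow_shiftX)
  qed
qed

lemma zero_outside_Tflat: "zero_outside N (Tflat N)"
  by (simp add: zero_outside_def Tflat_eq)

lemma Tflat_idempotent: "mmult N (Tflat N) (Tflat N) = Tflat N"
  by (intro ext) (auto simp: mmult_def Tflat_eq)

lemma mmult_Tflat_right: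
  assumes "zero_outside N A" and "\<And>i. i < N \<Longrightarrow> (\<Sum>l<N. A i l) = 0"
  shows "mmult N A (Tflat N) = (\<lambda>_ _. 0)"
proof (intro ext)
  fix i j
  show "mmult N A (Tflat N) i j = 0"
  proof (cases "i < N \<and> j < N")
    case True
    then have "mmult N A (Tflat N) i j = (\<Sum>l<N. A i l) / real N"
      by (simp add: mmult_def Tflat_eq sum_divide_distrib)
    then show ?thesis using assms(2) True by simp
  next
    case False
    then show ?thesis using assms(1) by (auto simp: mmult_def Tflat_eq zero_outside_def)
  qed
qed

lemma mmult_Tflat_left:
  assumes "zero_outside N A" and "\<And>j. j < N \<Longrightarrow> (\<Sum>l<N. A l j) = 0"
  shows "mmult N (Tflat N) A = (\<lambda>_ _. 0)"
proof (intro ext)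
  fix i j
  show "mmult N (Tflat N) A i j = 0"
  proof (cases "i < N \<and> j < N")
    case True
    then have "mmult N (Tflat N) A i j = (\<Sum>l<N. A l j) / real N"
      by (simp add: mmult_def Tflat_eq sum_divide_distrib)
    then show ?thesis using assms(2) True by simp
  next
    case False
    then show ?thesis using assms(1) by (auto simp: mmult_def Tflat_eq zero_outside_def)
  qed
qed

lemma zero_outside_Kgen: "zero_outside N (Kgen N k)"
  by (simp add: zero_outside_def Kgen_def mpow_shiftX mid_def)

lemma Kgen_row_sum:
  assumes "i < N"
  shows "(\<Sum>l<N. Kgen N k i l) = 0"
proof -
  have "(\<Sum>l<N. mpow N (shiftX N) k i l) = (\<Sum>l<N. if i = (l + k) mod N then 1 else 0)"
    using assms by (intro sum.cong) (auto simp: mpow_shiftX)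
  moreover have "(\<Sum>l<N. mid N i l) = (\<Sum>l<N. if i = l then 1 else 0)"
    using assms by (intro sum.cong) (auto simp: mid_def)
  ultimately show ?thesis
    unfolding Kgen_def sum_subtractf using assms sum_delta_rotate_mod by simp
qed

lemma Kgen_col_sum:
  assumes "j < N"
  shows "(\<Sum>l<N. Kgen N k l j) = 0"
proof -
  have "(\<Sum>l<N. mpow N (shiftX N) k l j) = (\<Sum>l<N. if l = (j + k) mod N then 1 else 0)"
    using assms by (intro sum.cong) (auto simp: mpow_shiftX)
  moreover have "(\<Sum>l<N. mid N l j) = (\<Sum>l<N. if l = j then 1 else 0)"
    using assms by (intro sum.cong) (auto simp: mid_def)
  ultimately show ?thesis
    unfolding Kgen_def sum_subtractf using assms by simp
qed

lemma sum_Kgen: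
  assumes "N > 0"
  shows "(\<Sum>k\<in>{1..N-1}. Kgen N k i j) = real N * Tflat N i j - real N * mid N i j"
proof -
  have "{..<N} = insert 0 {1..N-1}"
    using assms by auto
  then have "real N * Tflat N i j = mid N i j + (\<Sum>k\<in>{1..N-1}. mpow N (shiftX N) k i j)"
    using assms by (simp add: Tflat_def)
  then show ?thesis
    using assms by (simp add: Kgen_def sum_subtractf of_nat_diff algebra_simps)
qed

definition Kcomb :: "nat \<Rightarrow> (nat \<Rightarrow> real) \<Rightarrow> rmat" where
  "Kcomb N t = (\<lambda>i j. \<Sum>k\<in>{1..N-1}. t k * Kgen N k i j)"

lemma AC_eq: "AC N = {mexp N (Kcomb N t) | t. \<forall>k\<in>{1..N-1}. t k \<ge> 0}"
  by (simp add: AC_def Kcomb_def)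

lemma zero_outside_Kcomb: "zero_outside N (Kcomb N t)"
  unfolding Kcomb_def by (intro zero_outside_sum zero_outside_Kgen)

lemma mmult_Kcomb_Tflat: "mmult N (Kcomb N t) (Tflat N) = (\<lambda>_ _. 0)"
proof (rule mmult_Tflat_right[OF zero_outside_Kcomb])
  fix i assume "i < N"
  have "(\<Sum>l<N. Kcomb N t i l) = (\<Sum>k\<in>{1..N-1}. t k * (\<Sum>l<N. Kgen N k i l))"
    unfolding Kcomb_def sum_distrib_left by (rule sum.swap)
  then show "(\<Sum>l<N. Kcomb N t i l) = 0"
    using \<open>i < N\<close> by (simp add: Kgen_row_sum)
qed

lemma mmult_Tflat_Kcomb: "mmult N (Tflat N) (Kcomb N t) = (\<lambda>_ _. 0)"
proof (rule mmult_Tflat_left[OF zero_outside_Kcomb])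
  fix j assume "j < N"
  have "(\<Sum>l<N. Kcomb N t l j) = (\<Sum>k\<in>{1..N-1}. t k * (\<Sum>l<N. Kgen N k l j))"
    unfolding Kcomb_def sum_distrib_left by (rule sum.swap)
  then show "(\<Sum>l<N. Kcomb N t l j) = 0"
    using \<open>j < N\<close> by (simp add: Kgen_col_sum)
qed

lemma Kcomb_add_const:
  assumes "N > 0"
  shows "Kcomb N (\<lambda>k. t k + s)
       = (\<lambda>i j. (Kcomb N t i j + (real N * s) * Tflat N i j) + (- (real N * s)) * mid N i j)"
proof (intro ext)
  fix i j
  have "Kcomb N (\<lambda>k. t k + s) i j = Kcomb N t i j + s * (\<Sum>k\<in>{1..N-1}. Kgen N k i j)"
    by (simp add: Kcomb_def algebra_simps sum.distrib sum_distrib_left)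
  also have "\<dots> = (Kcomb N t i j + (real N * s) * Tflat N i j) + (- (real N * s)) * mid N i j"
    unfolding sum_Kgen[OF assms] by (simp add: algebra_simps)
  finally show "Kcomb N (\<lambda>k. t k + s) i j
      = (Kcomb N t i j + (real N * s) * Tflat N i j) + (- (real N * s)) * mid N i j" .
qed

lemma mexp_Kcomb_add_const:
  assumes "N > 0"
  shows "mexp N (Kcomb N (\<lambda>k. t k + s))
       = (\<lambda>i j. exp (- (real N * s)) * mexp N (Kcomb N t) i j + (1 - exp (- (real N * s))) * Tflat N i j)"
  unfolding Kcomb_add_const[OF assms]
    mexp_add_scaled_mid[OF zero_outside_add_scaled[OF zero_outside_Kcomb zero_outside_Tflat]]
    mexp_add_scaled_idempotent[OF zero_outside_Kcomb zero_outside_Tflat Tflat_idempotent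
      mmult_Kcomb_Tflat mmult_Tflat_Kcomb]
  by (simp add: algebra_simps exp_minus_inverse)

theorem corollary3:
  fixes N :: nat and T :: rmat and m :: real
  assumes "N \<ge> 1" and "T \<in> AC N" and "0 < m" and "m \<le> 1"
  shows "(\<lambda>i j. m * T i j + (1 - m) * Tflat N i j) \<in> AC N"
proof -
  obtain t where t: "\<forall>k\<in>{1..N-1}. t k \<ge> 0" and T: "T = mexp N (Kcomb N t)"
    using assms(2) by (auto simp: AC_eq)
  define s where "s = - ln m / real N"
  have "ln m \<le> 0"
    using assms by simp
  then have "s \<ge> 0"
    by (simp add: s_def divide_nonpos_nonneg)
  then have "\<forall>k\<in>{1..N-1}. t k + s \<ge> 0"
    using t by simp
  moreover have "exp (- (real N * s)) = m"
    using assms by (simp add: s_def)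
  then have "mexp N (Kcomb N (\<lambda>k. t k + s)) = (\<lambda>i j. m * T i j + (1 - m) * Tflat N i j)"
    using assms(1) by (simp add: mexp_Kcomb_add_const T)
  ultimately show ?thesis
    unfolding AC_eq by (auto intro!: exI[where x = "\<lambda>k. t k + s"])
qed

end
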